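(* Let $(B,g)$ be a feasible tradable credit scheme and let the travel times $\tau$ have a convex potential function. Then $\lambda\in\mathbb{R}_{\ge0}$ is a market equilibrium price if and only if $\lambda\in[\underline\lambda,\overline\lambda]$, where $\underline\lambda=\min\{\lambda\ge0:\exists x\in\mathrm{WE}(\lambda)\text{ with }G(x)\le B\}$ and $\overline\lambda=\sup\bigl(\{\lambda\ge0:\exists x\in\mathrm{WE}(\lambda)\text{ with }G(x)\ge B\}\cup\{0\}\bigr)$.
   Context: Let $G=(V,E)$ be a directed graph and $I$ a finite set of commodities; commodity $i$ has source $s_i$, sink $t_i$, demand $d_i>0$; $\mathcal P_i$ is its set of simple $s_i$–$t_i$ paths, $\mathcal P=\{(i,p)\}$. A flow $x\in\mathbb{R}^{\mathcal P}_{\ge0}$ is feasible if $\sum_{p\in\mathcal P_i}x_{i,p}=d_i$; $\mathcal F$ is the set of feasible flows; $x_e$ is the total flow on edge $e$. A tradable credit scheme is a pair $(B,g)$ with $B\ge0$ (number of credits) and credit charges $g_e\ge0$ for $e\in E$; $G(x)=\sum_eg_ex_e$. It is feasible if some $x\in\mathcal F$ has $G(x)\le B$. Travel times $\tau_{i,p}:\mathcal F\to\mathbb{R}$ have a convex potential: a convex differentiable $\Phi$ with $\tau_{i,p}(x)=\partial\Phi/\partial x_{i,p}(x)$ on $\mathcal F$. For $\lambda\ge0$, $c^\lambda_{i,p}(x)=\tau_{i,p}(x)+\lambda\sum_{e\in p}g_e$; $x\in\mathrm{WE}(\lambda)$ means $x\in\mathcal F$ and $x_{i,p}>0$ implies $c^\lambda_{i,p}(x)\le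 c^\lambda_{i,q}(x)$ for all $q\in\mathcal P_i$. A pair $(x,\lambda)$ with $x\in\mathcal F$, $\lambda\ge0$ is a market equilibrium if $x\in\mathrm{WE}(\lambda)$, $G(x)\le B$ and $\lambda(G(x)-B)=0$; then $\lambda$ is a market equilibrium price. *)

theory Defs
  imports "HOL-Analysis.Analysis"
begin

definition pedges :: "'v list \<Rightarrow> ('v \<times> 'v) set" where
  "pedges vs = set (zip vs (tl vs))"

definition spath :: "('v \<times> 'v) set \<Rightarrow> 'v \<Rightarrow> 'v \<Rightarrow> 'v list \<Rightarrow> bool" where
  "spath E a b vs \<longleftrightarrow> vs \<noteq> [] \<and> hd vs = a \<and> last vs = b \<and> distinct vs \<and> pedges vs \<subseteq> E"

definition Paths :: "('v \<times> 'v) set \<Rightarrow> 'i set \<Rightarrow> ('i \<Rightarrow> 'v) \<Rightarrow> ('i \<Rightarrow> 'v) \<Rightarrow> ('i \<times> 'v list) set" where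
  "Paths E I s t = {(i, p). i \<in> I \<and> spath E (s i) (t i) p}"

text \<open>R^P: real functions on P (extended by 0 outside P).\<close>
definition RP :: "('v \<times> 'v) set \<Rightarrow> 'i set \<Rightarrow> ('i \<Rightarrow> 'v) \<Rightarrow> ('i \<Rightarrow> 'v) \<Rightarrow> ('i \<times> 'v list \<Rightarrow> real) set" where
  "RP E I s t = {h. \<forall>ip. ip \<notin> Paths E I s t \<longrightarrow> h ip = 0}"

definition flows :: "('v \<times> 'v) set \<Rightarrow> 'i set \<Rightarrow> ('i \<Rightarrow> 'v) \<Rightarrow> ('i \<Rightarrow> 'v) \<Rightarrow> ('i \<Rightarrow> real)
      \<Rightarrow> ('i \<times> 'v list \<Rightarrow> real) set" where
  "flows E I s t d = {x. x \<in> RP E I s t \<and> (\<forall>ip \<in> Paths E I s t. x ip \<ge> 0) \<and>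
      (\<forall>i \<in> I. (\<Sum>p \<in> {p. spath E (s i) (t i) p}. x (i, p)) = d i)}"

definition edge_flow :: "('v \<times> 'v) set \<Rightarrow> 'i set \<Rightarrow> ('i \<Rightarrow> 'v) \<Rightarrow> ('i \<Rightarrow> 'v)
      \<Rightarrow> ('i \<times> 'v list \<Rightarrow> real) \<Rightarrow> 'v \<times> 'v \<Rightarrow> real" where
  "edge_flow E I s t x e = (\<Sum>ip \<in> Paths E I s t. if e \<in> pedges (snd ip) then x ip else 0)"

definition Gtot :: "('v \<times> 'v) set \<Rightarrow> 'i set \<Rightarrow> ('i \<Rightarrow> 'v) \<Rightarrow> ('i \<Rightarrow> 'v)
      \<Rightarrow> ('v \<times> 'v \<Rightarrow> real) \<Rightarrow> ('i \<times> 'v list \<Rightarrow> real) \<Rightarrow> real" where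
  "Gtot E I s t g x = (\<Sum>e \<in> E. g e * edge_flow E I s t x e)"

definition feasible_scheme :: "('v \<times> 'v) set \<Rightarrow> 'i set \<Rightarrow> ('i \<Rightarrow> 'v) \<Rightarrow> ('i \<Rightarrow> 'v) \<Rightarrow> ('i \<Rightarrow> real)
      \<Rightarrow> real \<Rightarrow> ('v \<times> 'v \<Rightarrow> real) \<Rightarrow> bool" where
  "feasible_scheme E I s t d B g \<longleftrightarrow> B \<ge> 0 \<and> (\<forall>e \<in> E. g e \<ge> 0) \<and>
      (\<exists>x \<in> flows E I s t d. Gtot E I s t g x \<le> B)"

definition normP :: "('i \<times> 'v list) set \<Rightarrow> ('i \<times> 'v list \<Rightarrow> real) \<Rightarrow> real" where
  "normP P h = sqrt (\<Sum>ip \<in> P. (h ip)\<^sup>2)"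

definition has_gradient_at ::
  "('v \<times> 'v) set \<Rightarrow> 'i set \<Rightarrow> ('i \<Rightarrow> 'v) \<Rightarrow> ('i \<Rightarrow> 'v)
    \<Rightarrow> (('i \<times> 'v list \<Rightarrow> real) \<Rightarrow> real) \<Rightarrow> ('i \<times> 'v list \<Rightarrow> real) \<Rightarrow> ('i \<times> 'v list \<Rightarrow> real) \<Rightarrow> bool" where
  "has_gradient_at E I s t \<Phi> x D \<longleftrightarrow>
     (\<forall>\<epsilon>>0. \<exists>\<delta>>0. \<forall>h \<in> RP E I s t. normP (Paths E I s t) h < \<delta> \<longrightarrow>
        \<bar>\<Phi> (\<lambda>ip. x ip + h ip) - \<Phi> x - (\<Sum>ip \<in> Paths E I s t. D ip * h ip)\<bar>
          \<le> \<epsilon> * normP (Paths E I s t) h)"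

definition has_convex_potential ::
  "('v \<times> 'v) set \<Rightarrow> 'i set \<Rightarrow> ('i \<Rightarrow> 'v) \<Rightarrow> ('i \<Rightarrow> 'v) \<Rightarrow> ('i \<Rightarrow> real)
    \<Rightarrow> ('i \<times> 'v list \<Rightarrow> ('i \<times> 'v list \<Rightarrow> real) \<Rightarrow> real) \<Rightarrow> bool" where
  "has_convex_potential E I s t d \<tau> \<longleftrightarrow>
     (\<exists>\<Phi>. (\<forall>x \<in> RP E I s t. \<forall>y \<in> RP E I s t. \<forall>u::real. 0 \<le> u \<and> u \<le> 1 \<longrightarrow>
              \<Phi> (\<lambda>ip. (1 - u) * x ip + u * y ip) \<le> (1 - u) * \<Phi> x + u * \<Phi> y)
        \<and> (\<forall>x \<in> RP E I s t. \<exists>D. has_gradient_at E I s t \<Phi> x D)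
        \<and> (\<forall>x \<in> flows E I s t d. has_gradient_at E I s t \<Phi> x (\<lambda>ip. \<tau> ip x)))"

definition cost :: "('i \<times> 'v list \<Rightarrow> ('i \<times> 'v list \<Rightarrow> real) \<Rightarrow> real) \<Rightarrow> ('v \<times> 'v \<Rightarrow> real)
      \<Rightarrow> real \<Rightarrow> 'i \<times> 'v list \<Rightarrow> ('i \<times> 'v list \<Rightarrow> real) \<Rightarrow> real" where
  "cost \<tau> g lam ip x = \<tau> ip x + lam * (\<Sum>e \<in> pedges (snd ip). g e)"

definition WE :: "('v \<times> 'v) set \<Rightarrow> 'i set \<Rightarrow> ('i \<Rightarrow> 'v) \<Rightarrow> ('i \<Rightarrow> 'v) \<Rightarrow> ('i \<Rightarrow> real)
      \<Rightarrow> ('i \<times> 'v list \<Rightarrow> ('i \<times> 'v list \<Rightarrow> real) \<Rightarrow> real) \<Rightarrow> ('v \<times> 'v \<Rightarrow> real) \<Rightarrow> real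
      \<Rightarrow> ('i \<times> 'v list \<Rightarrow> real) set" where
  "WE E I s t d \<tau> g lam = {x. x \<in> flows E I s t d \<and>
      (\<forall>i p. (i, p) \<in> Paths E I s t \<and> x (i, p) > 0 \<longrightarrow>
         (\<forall>q. spath E (s i) (t i) q \<longrightarrow> cost \<tau> g lam (i, p) x \<le> cost \<tau> g lam (i, q) x))}"

definition market_eq :: "('v \<times> 'v) set \<Rightarrow> 'i set \<Rightarrow> ('i \<Rightarrow> 'v) \<Rightarrow> ('i \<Rightarrow> 'v) \<Rightarrow> ('i \<Rightarrow> real)
      \<Rightarrow> ('i \<times> 'v list \<Rightarrow> ('i \<times> 'v list \<Rightarrow> real) \<Rightarrow> real) \<Rightarrow> real \<Rightarrow> ('v \<times> 'v \<Rightarrow> real)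
      \<Rightarrow> ('i \<times> 'v list \<Rightarrow> real) \<Rightarrow> real \<Rightarrow> bool" where
  "market_eq E I s t d \<tau> B g x lam \<longleftrightarrow> x \<in> flows E I s t d \<and> lam \<ge> 0 \<and>
      x \<in> WE E I s t d \<tau> g lam \<and> Gtot E I s t g x \<le> B \<and> lam * (Gtot E I s t g x - B) = 0"

definition market_eq_price :: "('v \<times> 'v) set \<Rightarrow> 'i set \<Rightarrow> ('i \<Rightarrow> 'v) \<Rightarrow> ('i \<Rightarrow> 'v) \<Rightarrow> ('i \<Rightarrow> real)
      \<Rightarrow> ('i \<times> 'v list \<Rightarrow> ('i \<times> 'v list \<Rightarrow> real) \<Rightarrow> real) \<Rightarrow> real \<Rightarrow> ('v \<times> 'v \<Rightarrow> real)
      \<Rightarrow> real \<Rightarrow> bool" where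
  "market_eq_price E I s t d \<tau> B g lam \<longleftrightarrow> (\<exists>x. market_eq E I s t d \<tau> B g x lam)"

end

theory Submission
  imports Defs
begin

(*
  For a price lam the Wardrop equilibria WE(lam) are exactly the minimizers over the feasible
  flows of the convex function Phi + lam * G: equilibria satisfy the variational inequality, and
  conversely a minimizer cannot gain by rerouting flow between two paths of one commodity.
  Comparing the optimality of minimizers at two prices shows that G decreases with the price, and
  compactness of the flow polytope makes the sets of prices admitting a minimizer with G <= B,
  resp. G >= B, closed.  So the first set is a ray [lo, oo) (nonempty by a penalty argument, or,
  when every flow has G >= B, because a suitable price turns the minimizer of Phi subject to
  G <= B into an equilibrium), and the second is a closed initial segment of [0, oo).  Since the minimizers form a convex set on which G is affine, the market equilibrium
  prices are the prices of the ray that are 0 or lie in the second set.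
*)

lemma set_subset_hd_pedges:
  assumes "vs \<noteq> []" shows "set vs \<subseteq> insert (hd vs) (snd ` pedges vs)"
proof -
  obtain a rest where vs: "vs = a # rest" using assms by (cases vs) auto
  have "map snd (zip (a # rest) rest) = rest"
    by (simp add: map_snd_zip_take)
  hence "set rest = snd ` set (zip (a # rest) rest)"
    by (metis set_map)
  thus ?thesis by (auto simp: vs pedges_def)
qed

lemma finite_Paths:
  assumes "finite E" "finite I"
  shows "finite (Paths E I s t)"
proof -
  define V where "V = s ` I \<union> snd ` E"
  have fV: "finite V" using assms by (simp add: V_def)
  have "Paths E I s t \<subseteq> I \<times> {vs. set vs \<subseteq> V \<and> length vs \<le> card V}"
  proof
    fix ip assume "ip \<in> Paths E I s t"
    then obtain i p where ip: "ip = (i,p)" "i \<in> I" "spath E (s i) (t i) p"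
      by (auto simp: Paths_def)
    hence sp: "p \<noteq> []" "hd p = s i" "distinct p" "pedges p \<subseteq> E" by (auto simp: spath_def)
    have "snd ` pedges p \<subseteq> snd ` E" using sp(4) by (rule image_mono)
    hence "set p \<subseteq> insert (s i) (snd ` E)" using set_subset_hd_pedges[OF sp(1)] sp(2) by blast
    hence "set p \<subseteq> V" using ip(2) by (auto simp: V_def)
    moreover have "length p \<le> card V"
      using distinct_card[OF sp(3)] card_mono[OF fV \<open>set p \<subseteq> V\<close>] by simp
    ultimately show "ip \<in> I \<times> {vs. set vs \<subseteq> V \<and> length vs \<le> card V}" using ip by auto
  qed
  moreover have "finite (I \<times> {vs. set vs \<subseteq> V \<and> length vs \<le> card V})"
    using assms fV by (simp add: finite_lists_length_le)
  ultimately show ?thesis by (rule finite_subset)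
qed

definition path_charge :: "('v \<times> 'v \<Rightarrow> real) \<Rightarrow> 'i \<times> 'v list \<Rightarrow> real" where
  "path_charge g ip = (\<Sum>e\<in>pedges (snd ip). g e)"

definition reroute :: "('a \<Rightarrow> real) \<Rightarrow> 'a \<Rightarrow> 'a \<Rightarrow> real \<Rightarrow> 'a \<Rightarrow> real" where
  "reroute x a b u = (\<lambda>ip. x ip + (if ip = b then u else 0) - (if ip = a then u else 0))"

locale credit_market =
  fixes E :: "('v \<times> 'v) set" and I :: "'i set" and s t :: "'i \<Rightarrow> 'v" and d :: "'i \<Rightarrow> real"
    and B :: real and g :: "'v \<times> 'v \<Rightarrow> real"
    and \<tau> :: "'i \<times> 'v list \<Rightarrow> ('i \<times> 'v list \<Rightarrow> real) \<Rightarrow> real"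
    and \<Phi> :: "('i \<times> 'v list \<Rightarrow> real) \<Rightarrow> real"
  assumes finite_E: "finite E" and finite_I: "finite I" and demand_pos: "\<forall>i\<in>I. d i > 0"
    and feasible: "feasible_scheme E I s t d B g"
    and convex: "\<forall>x\<in>RP E I s t. \<forall>y\<in>RP E I s t. \<forall>u::real. 0 \<le> u \<and> u \<le> 1 \<longrightarrow>
              \<Phi> (\<lambda>ip. (1 - u) * x ip + u * y ip) \<le> (1 - u) * \<Phi> x + u * \<Phi> y"
    and differentiable: "\<forall>x\<in>RP E I s t. \<exists>D. has_gradient_at E I s t \<Phi> x D"
    and gradient_tau: "\<forall>x\<in>flows E I s t d. has_gradient_at E I s t \<Phi> x (\<lambda>ip. \<tau> ip x)"
begin

abbreviation "\<P> \<equiv> Paths E I s t"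
abbreviation "\<R> \<equiv> RP E I s t"
abbreviation "\<F> \<equiv> flows E I s t d"
abbreviation "G \<equiv> Gtot E I s t g"
abbreviation "gp \<equiv> path_charge g"
abbreviation "paths i \<equiv> {p. spath E (s i) (t i) p}"

definition priced_potential :: "real \<Rightarrow> ('i \<times> 'v list \<Rightarrow> real) \<Rightarrow> real" where
  "priced_potential lam x = \<Phi> x + lam * G x"

definition minimizers :: "real \<Rightarrow> ('i \<times> 'v list \<Rightarrow> real) set" where
  "minimizers lam = {x\<in>\<F>. \<forall>y\<in>\<F>. priced_potential lam x \<le> priced_potential lam y}"

lemma finite_P: "finite \<P>" using finite_Paths finite_E finite_I by blast

lemma P_eq_Sigma: "\<P> = Sigma I paths" by (auto simp: Paths_def)

lemma finite_paths: "finite (paths i)" if "i \<in> I"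
proof -
  have "paths i \<subseteq> snd ` \<P>" using that by (force simp: Paths_def)
  thus ?thesis using finite_P finite_subset by blast
qed

lemma sum_P: "(\<Sum>ip\<in>\<P>. h ip) = (\<Sum>i\<in>I. \<Sum>p\<in>paths i. h (i,p))"
  unfolding P_eq_Sigma by (subst sum.Sigma) (auto simp: finite_I finite_paths)

lemma flows_iff:
  "x \<in> \<F> \<longleftrightarrow> x \<in> \<R> \<and> (\<forall>ip\<in>\<P>. 0 \<le> x ip) \<and> (\<forall>i\<in>I. (\<Sum>p\<in>paths i. x (i,p)) = d i)"
  by (simp add: flows_def)

lemma flows_RP: "x \<in> \<F> \<Longrightarrow> x \<in> \<R>" by (simp add: flows_iff)
lemma flows_nonneg: "x \<in> \<F> \<Longrightarrow> ip \<in> \<P> \<Longrightarrow> 0 \<le> x ip" by (simp add: flows_iff)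
lemma flows_sum: "x \<in> \<F> \<Longrightarrow> i \<in> I \<Longrightarrow> (\<Sum>p\<in>paths i. x (i,p)) = d i" by (simp add: flows_iff)

lemma flows_nonempty: "\<F> \<noteq> {}" using feasible by (auto simp: feasible_scheme_def)

lemma flows_le_total_demand:
  assumes x: "x \<in> \<F>" and ip: "ip \<in> \<P>" shows "x ip \<le> (\<Sum>i\<in>I. d i)"
proof -
  obtain i p where ipd: "ip = (i,p)" "i \<in> I" "p \<in> paths i" using ip by (auto simp: P_eq_Sigma)
  have "x (i,p) \<le> (\<Sum>p'\<in>paths i. x (i,p'))"
    using ipd flows_nonneg[OF x] by (intro member_le_sum) (auto simp: finite_paths P_eq_Sigma)
  also have "\<dots> = d i" using flows_sum[OF x ipd(2)] .
  also have "\<dots> \<le> (\<Sum>i\<in>I. d i)" using demand_pos ipd(2)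
    by (intro member_le_sum) (auto simp: finite_I less_imp_le)
  finally show ?thesis using ipd by simp
qed

lemma flows_convex_comb:
  assumes x: "x \<in> \<F>" and y: "y \<in> \<F>" and u: "0 \<le> u" "u \<le> 1"
  shows "(\<lambda>ip. (1-u)*x ip + u*y ip) \<in> \<F>"
  unfolding flows_iff
proof (intro conjI ballI)
  show "(\<lambda>ip. (1-u)*x ip + u*y ip) \<in> \<R>" using flows_RP[OF x] flows_RP[OF y] by (auto simp: RP_def)
next
  fix ip assume ip: "ip \<in> \<P>"
  show "0 \<le> (1-u)*x ip + u*y ip" using flows_nonneg[OF x ip] flows_nonneg[OF y ip] u by simp
next
  fix i assume i: "i \<in> I"
  have "(\<Sum>p\<in>paths i. (1-u)*x (i,p) + u*y (i,p))
      = (1-u)*(\<Sum>p\<in>paths i. x (i,p)) + u*(\<Sum>p\<in>paths i. y (i,p))"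
    by (simp add: sum.distrib sum_distrib_left)
  also have "\<dots> = d i" using flows_sum[OF x i] flows_sum[OF y i] by (simp add: algebra_simps)
  finally show "(\<Sum>p\<in>paths i. (1-u)*x (i,p) + u*y (i,p)) = d i" .
qed

lemma flows_reroute:
  assumes x: "x \<in> \<F>" and a: "a \<in> \<P>" and b: "b \<in> \<P>" and ab: "a \<noteq> b" "fst a = fst b"
    and u: "0 \<le> u" "u \<le> x a"
  shows "reroute x a b u \<in> \<F>"
  unfolding flows_iff
proof (intro conjI ballI)
  show "reroute x a b u \<in> \<R>" using flows_RP[OF x] a b by (auto simp: RP_def reroute_def)
next
  fix ip assume ip: "ip \<in> \<P>"
  show "0 \<le> reroute x a b u ip" using flows_nonneg[OF x ip] u ab by (auto simp: reroute_def)
next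
  fix i assume i: "i \<in> I"
  obtain j p where a': "a = (j,p)" "j \<in> I" "p \<in> paths j" using a by (auto simp: P_eq_Sigma)
  obtain q where b': "b = (j,q)" "q \<in> paths j" using b ab a' by (cases b) (auto simp: P_eq_Sigma)
  have "(\<Sum>p'\<in>paths i. reroute x a b u (i,p')) = (\<Sum>p'\<in>paths i. x (i,p'))
      + (\<Sum>p'\<in>paths i. if (i,p') = b then u else 0) - (\<Sum>p'\<in>paths i. if (i,p') = a then u else 0)"
    by (simp add: reroute_def sum.distrib sum_subtractf)
  also have "(\<Sum>p'\<in>paths i. if (i,p') = b then u else 0) = (\<Sum>p'\<in>paths i. if (i,p') = a then u else 0)"
    using a' b' finite_paths[OF a'(2)] by (cases "i = j") (simp_all add: sum.delta)
  finally show "(\<Sum>p'\<in>paths i. reroute x a b u (i,p')) = d i" using flows_sum[OF x i] by simp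
qed

lemma Gtot_eq_path_sum: "G x = (\<Sum>ip\<in>\<P>. gp ip * x ip)"
proof -
  have "G x = (\<Sum>e\<in>E. \<Sum>ip\<in>\<P>. if e \<in> pedges (snd ip) then g e * x ip else 0)"
    unfolding Gtot_def edge_flow_def by (auto simp: sum_distrib_left intro!: sum.cong)
  also have "\<dots> = (\<Sum>ip\<in>\<P>. \<Sum>e\<in>E. if e \<in> pedges (snd ip) then g e * x ip else 0)"
    by (rule sum.swap)
  also have "\<dots> = (\<Sum>ip\<in>\<P>. gp ip * x ip)"
  proof (rule sum.cong[OF refl])
    fix ip assume "ip \<in> \<P>"
    hence "pedges (snd ip) \<subseteq> E" by (auto simp: Paths_def spath_def)
    hence "{e\<in>E. e \<in> pedges (snd ip)} = pedges (snd ip)" by auto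
    thus "(\<Sum>e\<in>E. if e \<in> pedges (snd ip) then g e * x ip else 0) = gp ip * x ip"
      by (simp add: sum.inter_filter[symmetric] finite_E path_charge_def sum_distrib_right)
  qed
  finally show ?thesis .
qed

lemma Gtot_convex_comb: "G (\<lambda>ip. (1-u)*x ip + u*y ip) = (1-u)*G x + u*G y"
proof -
  have "(\<Sum>ip\<in>\<P>. gp ip * ((1-u)*x ip + u*y ip))
      = (\<Sum>ip\<in>\<P>. (1-u)*(gp ip * x ip) + u*(gp ip * y ip))"
    by (intro sum.cong) (auto simp: algebra_simps)
  thus ?thesis unfolding Gtot_eq_path_sum by (simp add: sum.distrib sum_distrib_left)
qed

lemma Gtot_reroute:
  assumes "a \<in> \<P>" "b \<in> \<P>"
  shows "G (reroute x a b u) = G x + u * (gp b - gp a)"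
  unfolding Gtot_eq_path_sum reroute_def
  using assms finite_P
  by (simp add: algebra_simps sum.distrib sum_subtractf if_distrib[of "\<lambda>z. gp _ * z"] cong: if_cong)

lemma Gtot_tendsto:
  "\<forall>ip\<in>\<P>. (\<lambda>n. xs n ip) \<longlonglongrightarrow> x ip \<Longrightarrow> (\<lambda>n. G (xs n)) \<longlonglongrightarrow> G x"
  unfolding Gtot_eq_path_sum by (intro tendsto_sum tendsto_mult tendsto_const) auto

lemma Gtot_bounded_on_flows: "\<exists>k. \<forall>y\<in>\<F>. \<bar>G y\<bar> \<le> k"
proof -
  have "\<bar>G y\<bar> \<le> (\<Sum>ip\<in>\<P>. \<bar>gp ip\<bar> * (\<Sum>i\<in>I. d i))" if y: "y \<in> \<F>" for y
  proof -
    have "\<bar>G y\<bar> \<le> (\<Sum>ip\<in>\<P>. \<bar>gp ip * y ip\<bar>)" unfolding Gtot_eq_path_sum by (rule sum_abs)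
    also have "\<dots> \<le> (\<Sum>ip\<in>\<P>. \<bar>gp ip\<bar> * (\<Sum>i\<in>I. d i))"
      using flows_nonneg[OF y] flows_le_total_demand[OF y]
      by (intro sum_mono) (simp add: abs_mult mult_left_mono)
    finally show ?thesis .
  qed
  thus ?thesis by blast
qed

lemma cost_eq: "cost \<tau> g lam ip x = \<tau> ip x + lam * gp ip"
  by (simp add: cost_def path_charge_def)

lemma flows_seq_compact:
  fixes xs :: "nat \<Rightarrow> 'i \<times> 'v list \<Rightarrow> real"
  assumes xs: "\<forall>n. xs n \<in> \<F>"
  shows "\<exists>l\<in>\<F>. \<exists>r. strict_mono r \<and> (\<forall>ip\<in>\<P>. (\<lambda>n. xs (r n) ip) \<longlonglongrightarrow> l ip)"
proof -
  have bnd: "bounded ((\<lambda>x. x k) ` range xs)" if "k \<in> \<P>" for k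
    unfolding bounded_real using flows_le_total_demand[OF _ that] flows_nonneg[OF _ that] xs
    by (intro exI[of _ "\<Sum>i\<in>I. d i"]) force
  obtain l r where r: "strict_mono r"
    and conv: "\<forall>\<epsilon>>0. eventually (\<lambda>n. \<forall>i\<in>\<P>. dist (xs (r n) i) (l i) < \<epsilon>) sequentially"
    using compact_lemma_general[where f=xs and proj="\<lambda>x k. x k" and unproj="\<lambda>x. x" and basis=\<P>]
      finite_P bnd by blast
  define l' where "l' = (\<lambda>ip. if ip \<in> \<P> then l ip else 0)"
  have lim: "\<forall>ip\<in>\<P>. (\<lambda>n. xs (r n) ip) \<longlonglongrightarrow> l' ip"
    unfolding tendsto_iff l'_def using conv by (auto elim!: eventually_mono)
  have "l' \<in> \<F>"
    unfolding flows_iff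
  proof (intro conjI ballI)
    show "l' \<in> \<R>" by (simp add: RP_def l'_def)
  next
    fix ip assume ip: "ip \<in> \<P>"
    show "0 \<le> l' ip" using lim[rule_format, OF ip] flows_nonneg[OF xs[rule_format] ip]
      by (intro LIMSEQ_le_const) auto
  next
    fix i assume i: "i \<in> I"
    have "(\<lambda>n. \<Sum>p\<in>paths i. xs (r n) (i,p)) \<longlonglongrightarrow> (\<Sum>p\<in>paths i. l' (i,p))"
      using lim i by (intro tendsto_sum) (auto simp: P_eq_Sigma)
    moreover have "(\<lambda>n. \<Sum>p\<in>paths i. xs (r n) (i,p)) = (\<lambda>n. d i)"
      using flows_sum[OF xs[rule_format] i] by simp
    ultimately show "(\<Sum>p\<in>paths i. l' (i,p)) = d i"
      using LIMSEQ_unique tendsto_const by metis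
  qed
  thus ?thesis using r lim by blast
qed

lemma normP_scale: "normP \<P> (\<lambda>ip. u * h ip) = \<bar>u\<bar> * normP \<P> h"
  unfolding normP_def
  by (simp add: power_mult_distrib sum_distrib_left[symmetric] real_sqrt_mult)

lemma gradient_inequality:
  assumes x: "x \<in> \<R>" and y: "y \<in> \<R>" and D: "has_gradient_at E I s t \<Phi> x D"
  shows "(\<Sum>ip\<in>\<P>. D ip * (y ip - x ip)) \<le> \<Phi> y - \<Phi> x"
proof (rule field_le_epsilon)
  fix e :: real assume e: "0 < e"
  define h where "h = (\<lambda>ip. y ip - x ip)"
  define N where "N = normP \<P> h"
  have N0: "N \<ge> 0" by (simp add: N_def normP_def sum_nonneg)
  define S where "S = (\<Sum>ip\<in>\<P>. D ip * h ip)"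
  have "e/(N+1) > 0" using e N0 by simp
  then obtain \<delta> where \<delta>: "\<delta> > 0" and small: "\<forall>h\<in>\<R>. normP \<P> h < \<delta> \<longrightarrow>
     \<bar>\<Phi> (\<lambda>ip. x ip + h ip) - \<Phi> x - (\<Sum>ip\<in>\<P>. D ip * h ip)\<bar> \<le> e/(N+1) * normP \<P> h"
    using D unfolding has_gradient_at_def by blast
  define u where "u = min 1 (\<delta> / (2*(N+1)))"
  have u: "0 < u" "u \<le> 1" using \<delta> N0 by (auto simp: u_def)
  have uN: "u * N < \<delta>"
  proof -
    have "u * N \<le> \<delta>/(2*(N+1)) * N" using N0 by (intro mult_right_mono) (auto simp: u_def)
    also have "\<dots> < \<delta>" using \<delta> N0 by (simp add: field_simps add_nonneg_pos)
    finally show ?thesis .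
  qed
  have "(\<lambda>ip. u * h ip) \<in> \<R>" using x y by (simp add: RP_def h_def)
  moreover have "normP \<P> (\<lambda>ip. u * h ip) = u * N" using u by (simp add: normP_scale N_def)
  moreover have "(\<Sum>ip\<in>\<P>. D ip * (u * h ip)) = u * S"
    by (simp add: S_def sum_distrib_left algebra_simps)
  ultimately have taylor: "\<bar>\<Phi> (\<lambda>ip. x ip + u * h ip) - \<Phi> x - u * S\<bar> \<le> e/(N+1) * (u*N)"
    using small uN by force
  have "(\<lambda>ip. x ip + u * h ip) = (\<lambda>ip. (1 - u) * x ip + u * y ip)"
    by (auto simp: h_def algebra_simps)
  hence "\<Phi> (\<lambda>ip. x ip + u * h ip) \<le> (1 - u) * \<Phi> x + u * \<Phi> y" using convex x y u by auto
  hence "u * S \<le> u * (\<Phi> y - \<Phi> x) + e/(N+1)*(u*N)"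
    using taylor by (simp add: abs_le_iff algebra_simps)
  hence "u * S \<le> u * (\<Phi> y - \<Phi> x + e/(N+1)*N)" by (simp add: algebra_simps)
  hence "S \<le> \<Phi> y - \<Phi> x + e/(N+1)*N" using u by simp
  moreover have "e/(N+1)*N \<le> e" using e N0 by (simp add: field_simps)
  ultimately show "(\<Sum>ip\<in>\<P>. D ip * (y ip - x ip)) \<le> \<Phi> y - \<Phi> x + e" by (simp add: S_def h_def)
qed

lemma potential_le_limit:
  assumes xs: "\<forall>n. xs n \<in> \<R>" and x: "x \<in> \<R>" and lim: "\<forall>ip\<in>\<P>. (\<lambda>n. xs n ip) \<longlonglongrightarrow> x ip"
    and le: "\<forall>n. \<Phi> (xs n) \<le> a n" and a: "a \<longlonglongrightarrow> \<alpha>"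
  shows "\<Phi> x \<le> \<alpha>"
proof -
  obtain D where D: "has_gradient_at E I s t \<Phi> x D" using differentiable x by blast
  have "\<Phi> x \<le> a n - (\<Sum>ip\<in>\<P>. D ip * (xs n ip - x ip))" for n
    using gradient_inequality[OF x xs[rule_format] D, of n] le[rule_format, of n] by linarith
  moreover have "(\<lambda>n. a n - (\<Sum>ip\<in>\<P>. D ip * (xs n ip - x ip)))
      \<longlonglongrightarrow> \<alpha> - (\<Sum>ip\<in>\<P>. D ip * (x ip - x ip))"
    by (intro tendsto_diff a tendsto_sum tendsto_mult tendsto_const) (use lim in auto)
  ultimately show ?thesis by (intro LIMSEQ_le_const) auto
qed

lemma potential_bounded_below_on_flows: "\<exists>lb. \<forall>y\<in>\<F>. lb \<le> \<Phi> y"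
proof -
  obtain x0 where x0: "x0 \<in> \<F>" using flows_nonempty by blast
  obtain D where D: "has_gradient_at E I s t \<Phi> x0 D" using differentiable flows_RP[OF x0] by blast
  define K where "K = (\<Sum>i\<in>I. d i)"
  have "\<Phi> x0 - (\<Sum>ip\<in>\<P>. \<bar>D ip\<bar> * (K + \<bar>x0 ip\<bar>)) \<le> \<Phi> y" if y: "y \<in> \<F>" for y
  proof -
    have "-(\<Sum>ip\<in>\<P>. \<bar>D ip\<bar> * (K + \<bar>x0 ip\<bar>)) \<le> (\<Sum>ip\<in>\<P>. D ip * (y ip - x0 ip))"
      unfolding sum_negf[symmetric]
    proof (rule sum_mono)
      fix ip assume ip: "ip \<in> \<P>"
      have "\<bar>y ip - x0 ip\<bar> \<le> K + \<bar>x0 ip\<bar>"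
        using flows_nonneg[OF y ip] flows_le_total_demand[OF y ip] by (auto simp: K_def)
      hence "\<bar>D ip * (y ip - x0 ip)\<bar> \<le> \<bar>D ip\<bar> * (K + \<bar>x0 ip\<bar>)"
        by (simp add: abs_mult mult_left_mono)
      thus "- (\<bar>D ip\<bar> * (K + \<bar>x0 ip\<bar>)) \<le> D ip * (y ip - x0 ip)" by linarith
    qed
    thus ?thesis using gradient_inequality[OF flows_RP[OF x0] flows_RP[OF y] D] by linarith
  qed
  thus ?thesis by blast
qed

lemma exists_minimizer:
  assumes S: "S \<subseteq> \<F>" "S \<noteq> {}"
    and closed: "\<And>xs l. \<forall>n::nat. xs n \<in> S \<Longrightarrow> l \<in> \<F> \<Longrightarrow>
               \<forall>ip\<in>\<P>. (\<lambda>n. xs n ip) \<longlonglongrightarrow> l ip \<Longrightarrow> l \<in> S"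
  shows "\<exists>x\<in>S. \<forall>y\<in>S. priced_potential lam x \<le> priced_potential lam y"
proof -
  obtain lb where lb: "\<forall>y\<in>\<F>. lb \<le> \<Phi> y" using potential_bounded_below_on_flows by blast
  obtain k where k: "\<forall>y\<in>\<F>. \<bar>G y\<bar> \<le> k" using Gtot_bounded_on_flows by blast
  have "lb - \<bar>lam\<bar> * k \<le> priced_potential lam y" if "y \<in> S" for y
  proof -
    have "\<bar>lam * G y\<bar> \<le> \<bar>lam\<bar> * k" using k that S by (simp add: abs_mult mult_left_mono subset_iff)
    thus ?thesis using lb that S unfolding priced_potential_def abs_le_iff by force
  qed
  hence bdd: "bdd_below (priced_potential lam ` S)" by (intro bdd_belowI[of _ "lb - \<bar>lam\<bar> * k"]) auto
  define m where "m = Inf (priced_potential lam ` S)"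
  have "\<exists>y\<in>S. priced_potential lam y < m + inverse (real (Suc n))" for n
    using cInf_lessD[of "priced_potential lam ` S" "m + inverse (real (Suc n))"] S(2)
    by (auto simp: m_def)
  then obtain ys where ys: "\<forall>n. ys n \<in> S \<and> priced_potential lam (ys n) < m + inverse (real (Suc n))"
    by metis
  hence ysF: "\<forall>n. ys n \<in> \<F>" using S(1) by blast
  obtain l r where l: "l \<in> \<F>" "strict_mono r" "\<forall>ip\<in>\<P>. (\<lambda>n. ys (r n) ip) \<longlonglongrightarrow> l ip"
    using flows_seq_compact[OF ysF] by blast
  have "l \<in> S" using closed[of "\<lambda>n. ys (r n)" l] ys l by blast
  have "(\<lambda>n. inverse (real (Suc (r n)))) \<longlonglongrightarrow> 0"
    using LIMSEQ_subseq_LIMSEQ[OF LIMSEQ_inverse_real_of_nat l(2)] by (simp add: o_def)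
  moreover have "(\<lambda>n. G (ys (r n))) \<longlonglongrightarrow> G l" by (rule Gtot_tendsto[OF l(3)])
  ultimately have "(\<lambda>n. m + inverse (real (Suc (r n))) - lam * G (ys (r n))) \<longlonglongrightarrow> m + 0 - lam * G l"
    by (intro tendsto_intros)
  moreover have "\<forall>n. \<Phi> (ys (r n)) \<le> m + inverse (real (Suc (r n))) - lam * G (ys (r n))"
    using ys unfolding priced_potential_def by (smt (verit))
  ultimately have "\<Phi> l \<le> m + 0 - lam * G l"
    using ysF flows_RP l by (intro potential_le_limit[of "\<lambda>n. ys (r n)" l]) auto
  hence "priced_potential lam l \<le> m" by (simp add: priced_potential_def)
  moreover have "m \<le> priced_potential lam y" if "y \<in> S" for y
    unfolding m_def using bdd that by (intro cInf_lower) auto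
  ultimately show ?thesis using \<open>l \<in> S\<close> by force
qed

lemma minimizers_nonempty: "minimizers lam \<noteq> {}"
  using exists_minimizer[of \<F> lam] flows_nonempty by (auto simp: minimizers_def)

lemma WE_variational_inequality:
  assumes x: "x \<in> WE E I s t d \<tau> g lam" and y: "y \<in> \<F>"
  shows "0 \<le> (\<Sum>ip\<in>\<P>. cost \<tau> g lam ip x * (y ip - x ip))"
proof -
  have xF: "x \<in> \<F>" and eq: "\<And>i p q. (i,p) \<in> \<P> \<Longrightarrow> x (i,p) > 0 \<Longrightarrow> q \<in> paths i \<Longrightarrow>
      cost \<tau> g lam (i,p) x \<le> cost \<tau> g lam (i,q) x"
    using x by (auto simp: WE_def)
  define C where "C ip = cost \<tau> g lam ip x" for ip
  have "0 \<le> (\<Sum>p\<in>paths i. C (i,p) * (y (i,p) - x (i,p)))" if i: "i \<in> I" for i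
  proof -
    have "\<exists>p0\<in>paths i. x (i,p0) > 0"
    proof (rule ccontr)
      assume "\<not> ?thesis"
      hence "(\<Sum>p\<in>paths i. x (i,p)) \<le> 0" by (intro sum_nonpos) auto
      thus False using flows_sum[OF xF i] demand_pos i by auto
    qed
    then obtain p0 where p0: "p0 \<in> paths i" "x (i,p0) > 0" by blast
    define m where "m = C (i,p0)"
    have m_le: "m \<le> C (i,p)" if "p \<in> paths i" for p
      using eq p0 i that by (auto simp: m_def C_def P_eq_Sigma)
    have used_min: "C (i,p) * x (i,p) = m * x (i,p)" if p: "p \<in> paths i" for p
    proof (cases "x (i,p) > 0")
      case True
      hence "C (i,p) \<le> m" using eq i p p0 by (auto simp: m_def C_def P_eq_Sigma)
      thus ?thesis using m_le[OF p] by simp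
    next
      case False
      hence "x (i,p) = 0" using flows_nonneg[OF xF, of "(i,p)"] i p by (auto simp: P_eq_Sigma)
      thus ?thesis by simp
    qed
    have "(\<Sum>p\<in>paths i. C (i,p) * (y (i,p) - x (i,p)))
        = (\<Sum>p\<in>paths i. C (i,p) * y (i,p)) - (\<Sum>p\<in>paths i. m * x (i,p))"
      using sum.cong[OF refl used_min, of "paths i"]
      by (simp add: right_diff_distrib sum_subtractf)
    also have "\<dots> \<ge> (\<Sum>p\<in>paths i. m * y (i,p)) - (\<Sum>p\<in>paths i. m * x (i,p))"
      using m_le flows_nonneg[OF y] i
      by (simp add: P_eq_Sigma) (intro sum_mono mult_right_mono, auto)
    moreover have "(\<Sum>p\<in>paths i. m * y (i,p)) - (\<Sum>p\<in>paths i. m * x (i,p)) = 0"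
      using flows_sum[OF y i] flows_sum[OF xF i] by (simp add: sum_distrib_left[symmetric])
    ultimately show ?thesis by linarith
  qed
  thus ?thesis unfolding sum_P C_def[symmetric] by (rule sum_nonneg)
qed

lemma WE_subset_minimizers: "WE E I s t d \<tau> g lam \<subseteq> minimizers lam"
proof
  fix x assume x: "x \<in> WE E I s t d \<tau> g lam"
  have xF: "x \<in> \<F>" using x by (simp add: WE_def)
  have "priced_potential lam x \<le> priced_potential lam y" if y: "y \<in> \<F>" for y
  proof -
    have "(\<Sum>ip\<in>\<P>. \<tau> ip x * (y ip - x ip)) \<le> \<Phi> y - \<Phi> x"
      using gradient_inequality[OF flows_RP[OF xF] flows_RP[OF y]] gradient_tau xF by blast
    moreover have "(\<Sum>ip\<in>\<P>. cost \<tau> g lam ip x * (y ip - x ip))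
        = (\<Sum>ip\<in>\<P>. \<tau> ip x * (y ip - x ip)) + (lam * G y - lam * G x)"
      by (simp add: cost_eq Gtot_eq_path_sum sum.distrib sum_distrib_left
          sum_subtractf algebra_simps)
    ultimately show ?thesis
      using WE_variational_inequality[OF x y] by (simp add: priced_potential_def)
  qed
  thus "x \<in> minimizers lam" using xF by (simp add: minimizers_def)
qed

text \<open>If \<Delta> > 0, moving u units from a to b changes the objective by -u\<Delta> up to a first-order
  error of at most \<Delta>/4 * sqrt 2 * u, so small reroutes would be strict improvements.\<close>
lemma reroute_first_order:
  assumes x: "x \<in> \<F>" and a: "a \<in> \<P>" and b: "b \<in> \<P>" and ab: "a \<noteq> b" and \<eta>: "\<eta> > 0"
    and opt: "\<And>u. 0 < u \<Longrightarrow> u \<le> \<eta> \<Longrightarrow> priced_potential lam x \<le> priced_potential lam (reroute x a b u)"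
  shows "\<tau> a x + lam * gp a \<le> \<tau> b x + lam * gp b"
proof (rule ccontr)
  define \<Delta> where "\<Delta> = (\<tau> a x + lam * gp a) - (\<tau> b x + lam * gp b)"
  assume "\<not> ?thesis"
  hence \<Delta>: "\<Delta> > 0" by (simp add: \<Delta>_def)
  obtain \<delta> where \<delta>: "\<delta> > 0" and small: "\<forall>h\<in>\<R>. normP \<P> h < \<delta> \<longrightarrow>
     \<bar>\<Phi> (\<lambda>ip. x ip + h ip) - \<Phi> x - (\<Sum>ip\<in>\<P>. \<tau> ip x * h ip)\<bar> \<le> \<Delta>/4 * normP \<P> h"
    using gradient_tau[rule_format, OF x] \<Delta> unfolding has_gradient_at_def
    by (meson divide_pos_pos zero_less_numeral)
  define u where "u = min \<eta> (\<delta>/4)"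
  have u: "0 < u" "u \<le> \<eta>" "2*u < \<delta>" using \<eta> \<delta> by (auto simp: u_def)
  define h where "h = (\<lambda>ip. (if ip = b then u else 0) - (if ip = a then u else 0))"
  have "(h ip)^2 = (if ip = b then u^2 else 0) + (if ip = a then u^2 else 0)" for ip
    using ab by (auto simp: h_def)
  hence "(\<Sum>ip\<in>\<P>. (h ip)^2) = 2 * u^2" using a b finite_P by (simp add: sum.distrib)
  hence "normP \<P> h = sqrt 2 * u" using u by (simp add: normP_def real_sqrt_mult)
  hence norm_h: "normP \<P> h \<le> 2 * u" using sqrt2_less_2 u by simp
  have "h \<in> \<R>" using a b by (auto simp: RP_def h_def)
  moreover have "(\<lambda>ip. x ip + h ip) = reroute x a b u" by (auto simp: reroute_def h_def)
  moreover have "normP \<P> h < \<delta>" using norm_h u by simp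
  moreover have "(\<Sum>ip\<in>\<P>. \<tau> ip x * h ip) = u * \<tau> b x - u * \<tau> a x"
    unfolding h_def using a b finite_P
    by (simp add: algebra_simps sum.distrib sum_subtractf if_distrib[of "\<lambda>z. \<tau> _ x * z"] cong: if_cong)
  ultimately have "\<bar>\<Phi> (reroute x a b u) - \<Phi> x - (u * \<tau> b x - u * \<tau> a x)\<bar> \<le> \<Delta>/4 * normP \<P> h"
    using small by auto
  moreover have "\<Delta>/4 * normP \<P> h \<le> \<Delta>/4 * (2*u)" using norm_h \<Delta> by (intro mult_left_mono) auto
  ultimately have "\<Phi> (reroute x a b u) - \<Phi> x \<le> u * \<tau> b x - u * \<tau> a x + \<Delta>/4 * (2*u)"
    unfolding abs_le_iff by linarith
  moreover have "priced_potential lam (reroute x a b u) - priced_potential lam x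
      = (\<Phi> (reroute x a b u) - \<Phi> x) + lam * (u * (gp b - gp a))"
    by (simp add: priced_potential_def Gtot_reroute[OF a b] algebra_simps)
  moreover have "u * \<tau> b x - u * \<tau> a x + lam * (u * (gp b - gp a)) = - (u * \<Delta>)"
    by (simp add: \<Delta>_def algebra_simps)
  moreover have "\<Delta>/4 * (2*u) = (u * \<Delta>)/2" by simp
  moreover have "u * \<Delta> > 0" using u \<Delta> by simp
  ultimately show False using opt[OF u(1,2)] by linarith
qed

lemma WE_if_pairwise_cost_order:
  assumes x: "x \<in> \<F>"
    and order: "\<And>a b. a \<in> \<P> \<Longrightarrow> b \<in> \<P> \<Longrightarrow> a \<noteq> b \<Longrightarrow> fst a = fst b \<Longrightarrow> x a > 0 \<Longrightarrow>
      \<tau> a x + lam * gp a \<le> \<tau> b x + lam * gp b"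
  shows "x \<in> WE E I s t d \<tau> g lam"
proof -
  have "cost \<tau> g lam (i,p) x \<le> cost \<tau> g lam (i,q) x"
    if ip: "(i,p) \<in> \<P>" "x (i,p) > 0" and q: "spath E (s i) (t i) q" for i p q
  proof (cases "p = q")
    case False
    have "(i,q) \<in> \<P>" using ip q by (auto simp: Paths_def)
    from order[OF ip(1) this _ _ ip(2)] show ?thesis using False by (simp add: cost_eq)
  qed simp
  thus ?thesis using x by (auto simp: WE_def)
qed

lemma minimizers_subset_WE: "minimizers lam \<subseteq> WE E I s t d \<tau> g lam"
proof
  fix x assume "x \<in> minimizers lam"
  hence xF: "x \<in> \<F>" and opt: "\<forall>y\<in>\<F>. priced_potential lam x \<le> priced_potential lam y"
    by (auto simp: minimizers_def)
  show "x \<in> WE E I s t d \<tau> g lam"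
  proof (rule WE_if_pairwise_cost_order[OF xF])
    fix a b assume a: "a \<in> \<P>" and b: "b \<in> \<P>" and ab: "a \<noteq> b" "fst a = fst b" and pos: "x a > 0"
    show "\<tau> a x + lam * gp a \<le> \<tau> b x + lam * gp b"
      using reroute_first_order[OF xF a b ab(1) pos] opt flows_reroute[OF xF a b ab] by simp
  qed
qed

lemma WE_eq_minimizers: "WE E I s t d \<tau> g lam = minimizers lam"
  using WE_subset_minimizers minimizers_subset_WE by blast

lemma minimizers_convex_comb:
  assumes x: "x \<in> minimizers lam" and y: "y \<in> minimizers lam" and u: "0 \<le> u" "u \<le> 1"
  shows "(\<lambda>ip. (1-u)*x ip + u*y ip) \<in> minimizers lam"
proof -
  have xF: "x \<in> \<F>" and yF: "y \<in> \<F>" using x y by (auto simp: minimizers_def)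
  have "priced_potential lam (\<lambda>ip. (1-u)*x ip + u*y ip) \<le> priced_potential lam z" if z: "z \<in> \<F>" for z
  proof -
    have "\<Phi> (\<lambda>ip. (1-u)*x ip + u*y ip) \<le> (1-u)*\<Phi> x + u*\<Phi> y"
      using convex flows_RP[OF xF] flows_RP[OF yF] u by blast
    hence "priced_potential lam (\<lambda>ip. (1-u)*x ip + u*y ip)
        \<le> (1-u) * priced_potential lam x + u * priced_potential lam y"
      unfolding priced_potential_def Gtot_convex_comb by (simp add: algebra_simps)
    also have "\<dots> \<le> (1-u) * priced_potential lam z + u * priced_potential lam z"
      using x y z u by (intro add_mono mult_left_mono) (auto simp: minimizers_def)
    finally show ?thesis by (simp add: algebra_simps)
  qed
  thus ?thesis using flows_convex_comb[OF xF yF u] by (simp add: minimizers_def)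
qed

lemma Gtot_minimizers_antimono:
  assumes "lam1 < lam2" and x1: "x1 \<in> minimizers lam1" and x2: "x2 \<in> minimizers lam2"
  shows "G x2 \<le> G x1"
proof -
  have "priced_potential lam1 x1 \<le> priced_potential lam1 x2"
    and "priced_potential lam2 x2 \<le> priced_potential lam2 x1"
    using x1 x2 by (auto simp: minimizers_def)
  hence "(lam2 - lam1) * (G x2 - G x1) \<le> 0"
    unfolding priced_potential_def by (simp add: algebra_simps)
  thus ?thesis using assms(1) by (simp add: mult_le_0_iff)
qed

lemma minimizers_limit:
  assumes lams: "lams \<longlonglongrightarrow> lam" and xs: "\<forall>n. xs n \<in> minimizers (lams n)"
  shows "\<exists>x\<in>minimizers lam. \<exists>r. strict_mono r \<and> (\<lambda>n. G (xs (r n))) \<longlonglongrightarrow> G x"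
proof -
  have xsF: "\<forall>n. xs n \<in> \<F>" using xs by (auto simp: minimizers_def)
  obtain l r where l: "l \<in> \<F>" "strict_mono r" "\<forall>ip\<in>\<P>. (\<lambda>n. xs (r n) ip) \<longlonglongrightarrow> l ip"
    using flows_seq_compact[OF xsF] by blast
  have lams_r: "(\<lambda>n. lams (r n)) \<longlonglongrightarrow> lam" using LIMSEQ_subseq_LIMSEQ[OF lams l(2)] by (simp add: o_def)
  have G_l: "(\<lambda>n. G (xs (r n))) \<longlonglongrightarrow> G l" by (rule Gtot_tendsto[OF l(3)])
  have "\<Phi> l \<le> \<Phi> y + lam * G y - lam * G l" if y: "y \<in> \<F>" for y
  proof (rule potential_le_limit)
    show "\<forall>n. xs (r n) \<in> \<R>" "l \<in> \<R>" using xsF l flows_RP by blast+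
    show "\<forall>ip\<in>\<P>. (\<lambda>n. xs (r n) ip) \<longlonglongrightarrow> l ip" using l by blast
    show "\<forall>n. \<Phi> (xs (r n)) \<le> \<Phi> y + lams (r n) * G y - lams (r n) * G (xs (r n))"
      using xs y by (auto simp: minimizers_def priced_potential_def algebra_simps)
    show "(\<lambda>n. \<Phi> y + lams (r n) * G y - lams (r n) * G (xs (r n))) \<longlonglongrightarrow> \<Phi> y + lam * G y - lam * G l"
      by (intro tendsto_intros lams_r G_l)
  qed
  hence "l \<in> minimizers lam" using l by (force simp: minimizers_def priced_potential_def)
  thus ?thesis using l(2) G_l by blast
qed

lemma minimizer_with_charge:
  assumes x1: "x1 \<in> minimizers lam" and x2: "x2 \<in> minimizers lam" and "G x1 \<le> c" "c \<le> G x2"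
  shows "\<exists>z\<in>minimizers lam. G z = c"
proof (cases "G x1 = G x2")
  case True
  thus ?thesis using x1 assms by (intro bexI[of _ x1]) auto
next
  case False
  define u where "u = (c - G x1) / (G x2 - G x1)"
  have u: "0 \<le> u" "u \<le> 1" using assms False by (auto simp: u_def field_simps)
  have "u * (G x2 - G x1) = c - G x1" using False by (simp add: u_def)
  hence "(1-u) * G x1 + u * G x2 = c" by (simp add: algebra_simps)
  thus ?thesis by (intro bexI[OF _ minimizers_convex_comb[OF x1 x2 u]]) (simp add: Gtot_convex_comb)
qed

definition low_prices :: "real set" where
  "low_prices = {lam. lam \<ge> 0 \<and> (\<exists>x \<in> WE E I s t d \<tau> g lam. G x \<le> B)}"

definition high_prices :: "real set" where
  "high_prices = {lam. lam \<ge> 0 \<and> (\<exists>x \<in> WE E I s t d \<tau> g lam. G x \<ge> B)}"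

lemma closed_prices_with_charge_in:
  assumes "closed C"
  shows "closed {lam. 0 \<le> lam \<and> (\<exists>x\<in>minimizers lam. G x \<in> C)}"
  unfolding closed_sequential_limits
proof (intro allI impI, elim conjE)
  fix lams lam assume lams: "\<forall>n. lams n \<in> {lam. 0 \<le> lam \<and> (\<exists>x\<in>minimizers lam. G x \<in> C)}"
    and lim: "lams \<longlonglongrightarrow> lam"
  have "\<forall>n. \<exists>x. x \<in> minimizers (lams n) \<and> G x \<in> C" using lams by blast
  then obtain xs where xs: "\<forall>n. xs n \<in> minimizers (lams n) \<and> G (xs n) \<in> C"
    by (metis choice)
  obtain x r where x: "x \<in> minimizers lam" "(\<lambda>n. G (xs (r n))) \<longlonglongrightarrow> G x"
    using minimizers_limit[OF lim] xs by blast
  have "G x \<in> C" using closed_sequentially[OF assms _ x(2)] xs by blast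
  moreover have "0 \<le> lam" using lim lams by (intro LIMSEQ_le_const) auto
  ultimately show "lam \<in> {lam. 0 \<le> lam \<and> (\<exists>x\<in>minimizers lam. G x \<in> C)}" using x(1) by blast
qed

lemma closed_low_prices: "closed low_prices"
  using closed_prices_with_charge_in[of "{..B}"] by (simp add: low_prices_def WE_eq_minimizers)

lemma closed_high_prices: "closed high_prices"
  using closed_prices_with_charge_in[of "{B..}"] by (simp add: high_prices_def WE_eq_minimizers)

lemma low_prices_upward:
  assumes lam1: "lam1 \<in> low_prices" and "lam1 \<le> lam2"
  shows "lam2 \<in> low_prices"
proof (cases "lam1 = lam2")
  case False
  obtain x1 where x1: "x1 \<in> minimizers lam1" "G x1 \<le> B"
    using lam1 by (auto simp: low_prices_def WE_eq_minimizers)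
  obtain x2 where x2: "x2 \<in> minimizers lam2" using minimizers_nonempty by blast
  have "G x2 \<le> B" using Gtot_minimizers_antimono[OF _ x1(1) x2] assms False x1(2) by simp
  thus ?thesis using x2 lam1 assms(2) by (auto simp: low_prices_def WE_eq_minimizers)
qed (use lam1 in simp)

lemma high_prices_downward:
  assumes lam2: "lam2 \<in> high_prices" and "0 \<le> lam1" "lam1 \<le> lam2"
  shows "lam1 \<in> high_prices"
proof (cases "lam1 = lam2")
  case False
  obtain x2 where x2: "x2 \<in> minimizers lam2" "B \<le> G x2"
    using lam2 by (auto simp: high_prices_def WE_eq_minimizers)
  obtain x1 where x1: "x1 \<in> minimizers lam1" using minimizers_nonempty by blast
  have "B \<le> G x1" using Gtot_minimizers_antimono[OF _ x1 x2(1)] assms False x2(2) by simp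
  thus ?thesis using x1 assms(2) by (auto simp: high_prices_def WE_eq_minimizers)
qed (use lam2 in simp)

lemma low_price_if_slack:
  assumes x0: "x0 \<in> \<F>" "G x0 < B"
  shows "\<exists>lam\<ge>0. \<exists>x\<in>minimizers lam. G x \<le> B"
proof -
  obtain lb where lb: "\<forall>y\<in>\<F>. lb \<le> \<Phi> y" using potential_bounded_below_on_flows by blast
  define lam where "lam = (\<bar>\<Phi> x0 - lb\<bar> + 1) / (B - G x0)"
  have lam: "lam > 0" "lam * (B - G x0) = \<bar>\<Phi> x0 - lb\<bar> + 1"
    using x0 by (auto simp: lam_def)
  obtain x where x: "x \<in> minimizers lam" using minimizers_nonempty by blast
  hence "priced_potential lam x \<le> priced_potential lam x0" and "lb \<le> \<Phi> x"
    using x0 lb by (auto simp: minimizers_def)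
  hence "lam * (G x - B) < 0"
    using lam abs_ge_self[of "\<Phi> x0 - lb"]
    by (simp add: priced_potential_def algebra_simps)
  hence "G x < B" using lam by (simp add: mult_less_0_iff)
  thus ?thesis using lam x less_imp_le by blast
qed

lemma tight_minimizer_cost_order:
  assumes tight: "\<forall>y\<in>\<F>. B \<le> G y"
    and xb: "xb \<in> \<F>" "G xb \<le> B" and opt: "\<forall>y\<in>\<F>. G y \<le> B \<longrightarrow> \<Phi> xb \<le> \<Phi> y"
    and a: "a \<in> \<P>" and b: "b \<in> \<P>" and ab: "a \<noteq> b" "fst a = fst b" and pos: "xb a > 0"
  shows "gp a \<le> gp b" and "gp a = gp b \<Longrightarrow> \<tau> a xb \<le> \<tau> b xb"
proof -
  have rerouted: "reroute xb a b u \<in> \<F>" "G (reroute xb a b u) = G xb + u * (gp b - gp a)"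
    if "0 \<le> u" "u \<le> xb a" for u
    using flows_reroute[OF xb(1) a b ab] Gtot_reroute[OF a b] that by auto
  show "gp a \<le> gp b"
  proof (rule ccontr)
    assume "\<not> ?thesis"
    hence "xb a * (gp b - gp a) < 0" using pos by (simp add: mult_pos_neg)
    thus False using rerouted[of "xb a"] tight xb(2) pos by force
  qed
  assume eq: "gp a = gp b"
  have "\<tau> a xb + 0 * gp a \<le> \<tau> b xb + 0 * gp b"
    using rerouted eq xb(2) opt by (intro reroute_first_order[OF xb(1) a b ab(1) pos])
      (auto simp: priced_potential_def)
  thus "\<tau> a xb \<le> \<tau> b xb" by simp
qed

lemma low_price_if_tight:
  assumes tight: "\<forall>y\<in>\<F>. B \<le> G y"
  shows "\<exists>lam\<ge>0. \<exists>x\<in>WE E I s t d \<tau> g lam. G x \<le> B"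
proof -
  define S where "S = {x\<in>\<F>. G x \<le> B}"
  have "\<exists>x\<in>S. \<forall>y\<in>S. priced_potential 0 x \<le> priced_potential 0 y"
  proof (rule exists_minimizer)
    show "S \<subseteq> \<F>" "S \<noteq> {}" using feasible by (auto simp: feasible_scheme_def S_def)
    fix xs l assume xs: "\<forall>n::nat. xs n \<in> S" and "l \<in> \<F>"
      and lim: "\<forall>ip\<in>\<P>. (\<lambda>n. xs n ip) \<longlonglongrightarrow> l ip"
    have "G l \<le> B" using Gtot_tendsto[OF lim] xs by (intro LIMSEQ_le_const2) (auto simp: S_def)
    thus "l \<in> S" using \<open>l \<in> \<F>\<close> by (simp add: S_def)
  qed
  then obtain xb where xb: "xb \<in> \<F>" "G xb \<le> B" and opt: "\<forall>y\<in>\<F>. G y \<le> B \<longrightarrow> \<Phi> xb \<le> \<Phi> y"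
    by (auto simp: S_def priced_potential_def)
  \<comment> \<open>any price above all ratios (\<tau> a - \<tau> b) / (gp b - gp a) with gp a < gp b works\<close>
  define Q where "Q = {ab \<in> \<P> \<times> \<P>. gp (fst ab) < gp (snd ab)}"
  define lam where
    "lam = (\<Sum>ab\<in>Q. \<bar>\<tau> (fst ab) xb - \<tau> (snd ab) xb\<bar> / (gp (snd ab) - gp (fst ab)))"
  have "lam \<ge> 0" unfolding lam_def by (intro sum_nonneg) (auto simp: Q_def)
  moreover have "xb \<in> WE E I s t d \<tau> g lam"
  proof (rule WE_if_pairwise_cost_order[OF xb(1)])
    fix a b assume a: "a \<in> \<P>" and b: "b \<in> \<P>" and ab: "a \<noteq> b" "fst a = fst b" and pos: "xb a > 0"
    note order = tight_minimizer_cost_order[OF tight xb opt a b ab pos]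
    show "\<tau> a xb + lam * gp a \<le> \<tau> b xb + lam * gp b"
    proof (cases "gp a = gp b")
      case False
      hence lt: "gp a < gp b" using order(1) by simp
      hence "(a,b) \<in> Q" using a b by (simp add: Q_def)
      moreover have "finite Q" using finite_P by (simp add: Q_def)
      ultimately have "(\<lambda>ab. \<bar>\<tau> (fst ab) xb - \<tau> (snd ab) xb\<bar> / (gp (snd ab) - gp (fst ab))) (a,b) \<le> lam"
        unfolding lam_def by (intro member_le_sum) (auto simp: Q_def)
      hence "\<bar>\<tau> a xb - \<tau> b xb\<bar> / (gp b - gp a) \<le> lam" by simp
      hence "\<tau> a xb - \<tau> b xb \<le> lam * (gp b - gp a)"
        using lt by (simp add: pos_divide_le_eq abs_le_iff)
      thus ?thesis by (simp add: algebra_simps)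
    qed (use order(2) in simp)
  qed
  ultimately show ?thesis using xb(2) by blast
qed

lemma low_prices_nonempty: "low_prices \<noteq> {}"
proof (cases "\<exists>x0\<in>\<F>. G x0 < B")
  case True
  thus ?thesis using low_price_if_slack by (force simp: low_prices_def WE_eq_minimizers)
next
  case False
  thus ?thesis using low_price_if_tight by (force simp: low_prices_def not_less)
qed

lemma low_prices_eq_atLeast: "\<exists>lo. low_prices = {lo..}"
proof -
  have bdd: "bdd_below low_prices" by (rule bdd_belowI[of _ 0]) (auto simp: low_prices_def)
  have "Inf low_prices \<in> low_prices"
    using closed_contains_Inf[OF low_prices_nonempty bdd closed_low_prices] .
  hence "low_prices = {Inf low_prices..}"
    using low_prices_upward cInf_lower[OF _ bdd] by auto
  thus ?thesis by blast
qed

lemma le_Sup_high_prices_iff: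
  assumes "0 \<le> lam"
  shows "ereal lam \<le> Sup (ereal ` (high_prices \<union> {0})) \<longleftrightarrow> lam = 0 \<or> lam \<in> high_prices"
proof
  assume le: "ereal lam \<le> Sup (ereal ` (high_prices \<union> {0}))"
  have "lam \<in> high_prices" if lam: "lam > 0"
  proof -
    have "lam \<in> closure high_prices"
      unfolding closure_approachable
    proof (intro allI impI)
      fix e :: real assume "e > 0"
      define e' where "e' = min e lam"
      have e': "0 < e'" "e' \<le> e" "e' \<le> lam" using \<open>e > 0\<close> lam by (auto simp: e'_def)
      have "ereal (lam - e') < ereal lam" using e' by simp
      also note le
      finally have "ereal (lam - e') < Sup (ereal ` (high_prices \<union> {0}))" .
      then obtain h where h: "h \<in> high_prices \<union> {0}" "lam - e' < h"
        unfolding less_Sup_iff by force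
      hence "h \<in> high_prices" "0 < h" using e' by auto
      hence "min h lam \<in> high_prices" using high_prices_downward lam by simp
      moreover have "dist (min h lam) lam < e" using h(2) e' by (simp add: dist_real_def)
      ultimately show "\<exists>y\<in>high_prices. dist y lam < e" by blast
    qed
    thus ?thesis using closed_high_prices by (simp add: closure_closed)
  qed
  thus "lam = 0 \<or> lam \<in> high_prices" using assms by linarith
next
  assume "lam = 0 \<or> lam \<in> high_prices"
  thus "ereal lam \<le> Sup (ereal ` (high_prices \<union> {0}))" by (intro Sup_upper imageI) auto
qed

lemma market_eq_price_iff:
  "market_eq_price E I s t d \<tau> B g lam \<longleftrightarrow> lam \<in> low_prices \<and> (lam = 0 \<or> lam \<in> high_prices)"
proof
  assume "market_eq_price E I s t d \<tau> B g lam"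
  then obtain x where "x \<in> WE E I s t d \<tau> g lam" "lam \<ge> 0" "G x \<le> B" "lam * (G x - B) = 0"
    by (auto simp: market_eq_price_def market_eq_def)
  thus "lam \<in> low_prices \<and> (lam = 0 \<or> lam \<in> high_prices)"
    by (auto simp: low_prices_def high_prices_def)
next
  assume lam: "lam \<in> low_prices \<and> (lam = 0 \<or> lam \<in> high_prices)"
  then obtain x1 where x1: "x1 \<in> minimizers lam" "G x1 \<le> B" and "lam \<ge> 0"
    by (auto simp: low_prices_def WE_eq_minimizers)
  have "\<exists>x\<in>minimizers lam. G x \<le> B \<and> lam * (G x - B) = 0"
  proof (cases "lam = 0")
    case False
    then obtain x2 where "x2 \<in> minimizers lam" "B \<le> G x2"
      using lam by (auto simp: high_prices_def WE_eq_minimizers)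
    thus ?thesis using minimizer_with_charge[OF x1(1)] x1(2) by force
  qed (use x1 in auto)
  thus "market_eq_price E I s t d \<tau> B g lam"
    using \<open>lam \<ge> 0\<close> by (auto simp: market_eq_price_def market_eq_def WE_eq_minimizers minimizers_def)
qed

end

theorem lemma5p8:
  fixes E :: "('v \<times> 'v) set" and I :: "'i set" and s t :: "'i \<Rightarrow> 'v" and d :: "'i \<Rightarrow> real"
    and B :: real and g :: "'v \<times> 'v \<Rightarrow> real"
    and \<tau> :: "'i \<times> 'v list \<Rightarrow> ('i \<times> 'v list \<Rightarrow> real) \<Rightarrow> real"
  assumes "finite E" and "finite I" and "\<forall>i \<in> I. d i > 0"
    and "feasible_scheme E I s t d B g"
    and "has_convex_potential E I s t d \<tau>"
  shows "\<exists>lo. lo \<in> {lam. lam \<ge> 0 \<and> (\<exists>x \<in> WE E I s t d \<tau> g lam. Gtot E I s t g x \<le> B)}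
          \<and> (\<forall>lam \<in> {lam. lam \<ge> 0 \<and> (\<exists>x \<in> WE E I s t d \<tau> g lam. Gtot E I s t g x \<le> B)}. lo \<le> lam)
          \<and> (\<forall>lam \<ge> 0. market_eq_price E I s t d \<tau> B g lam \<longleftrightarrow>
               lo \<le> lam \<and> ereal lam \<le> Sup (ereal ` ({lam. lam \<ge> 0 \<and>
                   (\<exists>x \<in> WE E I s t d \<tau> g lam. Gtot E I s t g x \<ge> B)} \<union> {0})))"
proof -
  obtain \<Phi> where "credit_market E I s t d B g \<tau> \<Phi>"
    using assms unfolding has_convex_potential_def credit_market_def by blast
  then interpret credit_market E I s t d B g \<tau> \<Phi> .
  obtain lo where lo: "low_prices = {lo..}" using low_prices_eq_atLeast by blast
  show ?thesis
    unfolding low_prices_def[symmetric] high_prices_def[symmetric]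
    using lo market_eq_price_iff le_Sup_high_prices_iff by (intro exI[of _ lo]) auto
qed

end
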